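(* Let $p,q$ be odd primes with $q-p=2$, let $\varepsilon\in\{1,-1\}$, let $D=D_1\cdots D_n$ ($n\ge 0$) be a product of distinct odd primes with $\gcd(pq,D)=1$, and let $E_D/\mathbb{Q}$ be the elliptic curve $y^2=x(x+\varepsilon pD)(x+\varepsilon qD)$. Then $E_D$ has no anomalous primes, i.e. $\mathrm{Anom}(E_D/\mathbb{Q})=\emptyset$.
   Context: A prime $l$ is anomalous for an elliptic curve $E/\mathbb{Q}$ if $E$ has good reduction at $l$ and $\#\widetilde{E}_l(\mathbb{F}_l)\equiv 0\pmod l$, where $\widetilde{E}_l$ is the reduction of $E$ modulo $l$. $\mathrm{Anom}(E/\mathbb{Q})$ denotes the set of anomalous primes for $E$. *)

theory Defs
  imports Complex_Main "HOL-Computational_Algebra.Primes"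
begin

text \<open>A (long) Weierstrass model y^2 + a1 x y + a3 y = x^3 + a2 x^2 + a4 x + a6,
  given by its coefficients (a1, a2, a3, a4, a6).\<close>
datatype 'a wmodel = WM (a1: 'a) (a2: 'a) (a3: 'a) (a4: 'a) (a6: 'a)

definition wdisc :: "'a::comm_ring_1 wmodel \<Rightarrow> 'a" where
  "wdisc W = (let b2 = a1 W ^ 2 + 4 * a2 W;
                 b4 = 2 * a4 W + a1 W * a3 W;
                 b6 = a3 W ^ 2 + 4 * a6 W;
                 b8 = a1 W ^ 2 * a6 W + 4 * a2 W * a6 W - a1 W * a3 W * a4 W
                      + a2 W * a3 W ^ 2 - a4 W ^ 2
             in - (b2 ^ 2 * b8) - 8 * b4 ^ 3 - 27 * b6 ^ 2 + 9 * b2 * b4 * b6)"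

text \<open>Isomorphism over Q of Weierstrass models via an admissible change of variables
  x = u^2 x' + r, y = u^3 y' + s u^2 x' + t (u nonzero), transforming W into W'.\<close>
definition wiso :: "rat wmodel \<Rightarrow> rat wmodel \<Rightarrow> bool" where
  "wiso W W' \<longleftrightarrow> (\<exists>u r s t. u \<noteq> 0 \<and>
      u * a1 W' = a1 W + 2 * s \<and>
      u ^ 2 * a2 W' = a2 W - s * a1 W + 3 * r - s ^ 2 \<and>
      u ^ 3 * a3 W' = a3 W + r * a1 W + 2 * t \<and>
      u ^ 4 * a4 W' = a4 W - s * a3 W + 2 * r * a2 W - (t + r * s) * a1 W + 3 * r ^ 2 - 2 * s * t \<and>
      u ^ 6 * a6 W' = a6 W + r * a4 W + r ^ 2 * a2 W + r ^ 3 - t * a3 W - t ^ 2 - r * t * a1 W)"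

definition weq :: "int wmodel \<Rightarrow> int \<Rightarrow> int \<Rightarrow> int" where
  "weq W x y = y ^ 2 + a1 W * x * y + a3 W * y - x ^ 3 - a2 W * x ^ 2 - a4 W * x - a6 W"

text \<open>Number of F_l-points (including the point at infinity) of the reduction mod l
  of an integral model W.\<close>
definition npoints_mod :: "int wmodel \<Rightarrow> nat \<Rightarrow> nat" where
  "npoints_mod W l = card {(x, y). x < l \<and> y < l \<and> int l dvd weq W (int x) (int y)} + 1"

definition good_reduction :: "rat wmodel \<Rightarrow> nat \<Rightarrow> bool" where
  "good_reduction E l \<longleftrightarrow> (\<exists>W. wiso E (map_wmodel of_int W) \<and> \<not> int l dvd wdisc W)"

definition anomalous :: "rat wmodel \<Rightarrow> nat \<Rightarrow> bool" where
  "anomalous E l \<longleftrightarrow> prime l \<and> good_reduction E l \<and>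
     (\<exists>W. wiso E (map_wmodel of_int W) \<and> \<not> int l dvd wdisc W \<and> l dvd npoints_mod W l)"

definition Anom :: "rat wmodel \<Rightarrow> nat set" where
  "Anom E = {l. anomalous E l}"

text \<open>The curve y^2 = x(x+a)(x+b) = x^3 + (a+b)x^2 + ab x.\<close>
definition E_ab :: "rat \<Rightarrow> rat \<Rightarrow> rat wmodel" where
  "E_ab a b = WM 0 (a + b) 0 (a * b) 0"

end

theory Submission
  imports Defs "HOL-Library.Z2" "HOL-Library.Disjoint_Sets" "HOL-Number_Theory.Modular_Inverse"
begin

text \<open>
  An integral model \<open>W\<close> of \<open>E_D\<close> arises from an admissible change of variables, so the values of
  \<open>4 x\<close> at its three points of order 2 are rational roots of a monic integral cubic, hence
  integers \<open>F1, F2, F3\<close>; coprimality of \<open>p\<close> and \<open>q\<close> gives \<open>F1 - F2 = C p\<close>, \<open>F1 - F3 = C q\<close>,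
  and \<open>q - p = 2\<close> gives \<open>64 \<Delta>(W) = C^6 p^2 q^2\<close>. A parity analysis shows that \<open>\<Delta>(W)\<close> is even,
  so there is no good reduction at 2.

  At an odd prime \<open>l\<close> of good reduction, completing the square turns the reduction into
  \<open>y^2 = x (x - \<alpha>) (x - \<beta>)\<close> with \<open>\<alpha>, \<beta>, \<alpha> - \<beta>\<close> units mod \<open>l\<close>. The three roots carry one point
  each, every other abscissa 0 or 2 points, and the abscissas carrying 2 points are permuted by
  the involution \<open>x \<mapsto> \<alpha>\<beta>/x\<close> (translation by \<open>(0, 0)\<close>), whose fixed points \<open>\<plusminus>\<surd>(\<alpha>\<beta>)\<close> come in
  pairs. Hence \<open>4\<close> divides the number of points, which is also less than \<open>2 l\<close>; as \<open>l\<close> is odd,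
  \<open>l\<close> cannot divide it.
\<close>

lemma even_card_iff_even_card_fixpoints:
  assumes "finite A" "\<And>x. x \<in> A \<Longrightarrow> \<sigma> x \<in> A" "\<And>x. x \<in> A \<Longrightarrow> \<sigma> (\<sigma> x) = x"
  shows "even (card A) \<longleftrightarrow> even (card {x\<in>A. \<sigma> x = x})"
proof -
  let ?F = "{x\<in>A. \<sigma> x = x}"
  have "(\<Sum>x\<in>A - ?F. 1::bit) = 0"
    by (rule sum_involution_eq_0[where h = \<sigma>]) (use assms in auto)
  moreover have "of_nat n = (0::bit) \<longleftrightarrow> even n" for n
    by (induction n) auto
  ultimately have "even (card (A - ?F))"
    by simp
  moreover have "card A = card (A - ?F) + card ?F"
    using assms(1) card_Diff_subset[of ?F A] card_mono[of A ?F] by (auto intro: finite_subset)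
  ultimately show ?thesis
    by simp
qed

section \<open>Square roots modulo a prime\<close>

definition sqrts_mod :: "int \<Rightarrow> int \<Rightarrow> int set" where
  "sqrts_mod L v = {y \<in> {0..<L}. [y^2 = v] (mod L)}"

lemma finite_sqrts_mod [simp]: "finite (sqrts_mod L v)"
  by (rule finite_subset[of _ "{0..<L}"]) (auto simp: sqrts_mod_def)

lemma cong_square_imp_cong_or_cong_uminus:
  fixes L x y :: int
  assumes "prime L" "[x^2 = y^2] (mod L)"
  shows "[x = y] (mod L) \<or> [x = - y] (mod L)"
proof -
  have "L dvd (x - y) * (x + y)"
    using assms(2) by (simp add: cong_iff_dvd_diff power2_eq_square algebra_simps)
  then show ?thesis
    using assms(1) by (auto simp: cong_iff_dvd_diff prime_dvd_mult_iff)
qed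

lemma sqrts_mod_of_cong_0:
  fixes L v :: int
  assumes "prime L" "[v = 0] (mod L)"
  shows "sqrts_mod L v = {0}"
proof -
  have "y = 0" if "0 \<le> y" "y < L" "[y^2 = v] (mod L)" for y
  proof -
    have "[y^2 = 0] (mod L)"
      using that(3) assms(2) by (rule cong_trans)
    then show ?thesis
      using that(1,2) assms(1) cong_less_imp_eq_int[of y L 0]
      by (auto simp: cong_0_iff prime_dvd_power_iff)
  qed
  then show ?thesis
    using assms prime_gt_0_int[OF assms(1)] by (auto simp: sqrts_mod_def cong_sym)
qed

lemma sqrts_mod_eq_pair:
  fixes L v y :: int
  assumes L: "prime L" "odd L" and v: "\<not> L dvd v" and y: "y \<in> sqrts_mod L v"
  shows "sqrts_mod L v = {y, L - y}" and "y \<noteq> L - y"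
proof -
  have y_bounds: "0 \<le> y" "y < L" and y_sqrt: "[y^2 = v] (mod L)"
    using y by (auto simp: sqrts_mod_def)
  have "y \<noteq> 0"
    using y_sqrt v by (auto simp: cong_0_iff[symmetric] cong_sym_eq)
  moreover have "[(L - y)^2 = y^2] (mod L)"
    unfolding cong_iff_lin by (rule exI[of _ "2 * y - L"]) (simp add: power2_eq_square algebra_simps)
  ultimately have "L - y \<in> sqrts_mod L v"
    using y_bounds y_sqrt by (auto simp: sqrts_mod_def intro: cong_trans)
  moreover have "x \<in> {y, L - y}" if "x \<in> sqrts_mod L v" for x
  proof -
    have x_bounds: "0 \<le> x" "x < L" and "[x^2 = y^2] (mod L)"
      using that y_sqrt by (auto simp: sqrts_mod_def intro: cong_trans cong_sym)
    moreover have "[- y = L - y] (mod L)"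
      by (simp add: cong_iff_lin)
    ultimately have "[x = y] (mod L) \<or> [x = L - y] (mod L)"
      using cong_square_imp_cong_or_cong_uminus[OF L(1)] cong_trans by blast
    then show ?thesis
      using x_bounds y_bounds \<open>y \<noteq> 0\<close> cong_less_imp_eq_int by auto
  qed
  ultimately show "sqrts_mod L v = {y, L - y}"
    using y by blast
  show "y \<noteq> L - y"
    using L(2) by auto
qed

lemma card_sqrts_mod:
  fixes L v :: int
  assumes "prime L" "odd L"
  shows "card (sqrts_mod L v) = (if L dvd v then 1 else if sqrts_mod L v = {} then 0 else 2)"
proof (cases "L dvd v \<or> sqrts_mod L v = {}")
  case True
  then show ?thesis
    using sqrts_mod_of_cong_0[OF assms(1)] by (auto simp: cong_0_iff)
next
  case False
  then obtain y where "y \<in> sqrts_mod L v" "\<not> L dvd v"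
    by blast
  then show ?thesis
    using sqrts_mod_eq_pair[OF assms \<open>\<not> L dvd v\<close> \<open>y \<in> sqrts_mod L v\<close>] by simp
qed

section \<open>Points of \<open>y^2 = x (x - \<alpha>) (x - \<beta>)\<close> modulo an odd prime\<close>

definition split_cubic :: "int \<Rightarrow> int \<Rightarrow> int \<Rightarrow> int" where
  "split_cubic \<alpha> \<beta> x = x * (x - \<alpha>) * (x - \<beta>)"

lemma cong_split_cubic:
  "[x = x'] (mod L) \<Longrightarrow> [split_cubic \<alpha> \<beta> x = split_cubic \<alpha> \<beta> x'] (mod L)"
  unfolding split_cubic_def by (intro cong_mult cong_diff cong_refl)

definition cubic_points :: "int \<Rightarrow> int \<Rightarrow> int \<Rightarrow> (int \<times> int) set" where
  "cubic_points L \<alpha> \<beta> = {(x, y) \<in> {0..<L} \<times> {0..<L}. [y^2 = split_cubic \<alpha> \<beta> x] (mod L)}"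

locale split_cubic_mod =
  fixes L \<alpha> \<beta> :: int
  assumes prime: "prime L" and odd: "odd L"
    and not_dvd_\<alpha>: "\<not> L dvd \<alpha>" and not_dvd_\<beta>: "\<not> L dvd \<beta>" and not_dvd_diff: "\<not> L dvd \<alpha> - \<beta>"
begin

definition roots :: "int set" where
  "roots = {x \<in> {0..<L}. L dvd split_cubic \<alpha> \<beta> x}"

definition two_point_abscissas :: "int set" where
  "two_point_abscissas =
     {x \<in> {0..<L}. \<not> L dvd split_cubic \<alpha> \<beta> x \<and> sqrts_mod L (split_cubic \<alpha> \<beta> x) \<noteq> {}}"

text \<open>The abscissa of \<open>P + (0, 0)\<close>: on \<open>y^2 = x (x - \<alpha>) (x - \<beta>)\<close> one has
  \<open>(x, y) + (0, 0) = (\<alpha>\<beta>/x, -\<alpha>\<beta>y/x^2)\<close>.\<close>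
definition translate :: "int \<Rightarrow> int" where
  "translate x = \<alpha> * \<beta> * modular_inverse L x mod L"

lemma L_pos: "0 < L"
  using prime by (rule prime_gt_0_int)

lemma cong_modular_inverse:
  assumes "\<not> L dvd x"
  shows "[x * modular_inverse L x = 1] (mod L)"
  using assms prime by (intro cong_modular_inverse1) (simp add: prime_imp_coprime coprime_commute)

lemma not_dvd_modular_inverse:
  assumes "\<not> L dvd x"
  shows "\<not> L dvd modular_inverse L x"
proof
  assume "L dvd modular_inverse L x"
  then have "L dvd 1"
    using cong_dvd_iff[OF cong_modular_inverse[OF assms]] by simp
  then show False
    using prime not_prime_unit by blast
qed

lemma not_dvd_mult_iff: "\<not> L dvd x * y \<longleftrightarrow> \<not> L dvd x \<and> \<not> L dvd y"
  using prime by (simp add: prime_dvd_mult_iff)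

lemma mem_two_point_abscissas:
  assumes "0 \<le> x" "x < L" "[y^2 = split_cubic \<alpha> \<beta> x] (mod L)" "\<not> L dvd y"
  shows "x \<in> two_point_abscissas"
proof -
  have "\<not> L dvd split_cubic \<alpha> \<beta> x"
  proof
    assume "L dvd split_cubic \<alpha> \<beta> x"
    then have "L dvd y^2"
      using cong_dvd_iff[OF assms(3)] by simp
    then show False
      using assms(4) prime prime_dvd_power by blast
  qed
  moreover have "y mod L \<in> sqrts_mod L (split_cubic \<alpha> \<beta> x)"
    using assms(3) L_pos by (simp add: sqrts_mod_def cong_def power_mod)
  ultimately show ?thesis
    using assms(1,2) by (auto simp: two_point_abscissas_def)
qed

lemma two_point_abscissasE:
  assumes "x \<in> two_point_abscissas"
  obtains y where "[y^2 = split_cubic \<alpha> \<beta> x] (mod L)" "\<not> L dvd y" "\<not> L dvd x" "0 \<le> x" "x < L"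
proof -
  obtain y where y: "[y^2 = split_cubic \<alpha> \<beta> x] (mod L)" and nd: "\<not> L dvd split_cubic \<alpha> \<beta> x"
    using assms by (auto simp: two_point_abscissas_def sqrts_mod_def)
  then have "\<not> L dvd y"
    using cong_dvd_iff[OF y] by (auto simp: power2_eq_square)
  moreover have "\<not> L dvd x"
    using nd by (auto simp: split_cubic_def)
  ultimately show ?thesis
    using that y assms by (auto simp: two_point_abscissas_def)
qed

lemma translate_mem:
  assumes "x \<in> two_point_abscissas"
  shows "translate x \<in> two_point_abscissas"
proof -
  obtain y where y: "[y^2 = split_cubic \<alpha> \<beta> x] (mod L)" and "\<not> L dvd y" "\<not> L dvd x"
    using assms by (rule two_point_abscissasE)
  define w where "w = modular_inverse L x"
  have w: "[x * w = 1] (mod L)" "\<not> L dvd w"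
    unfolding w_def using \<open>\<not> L dvd x\<close> by (rule cong_modular_inverse, rule not_dvd_modular_inverse)
  obtain k1 k2 where "split_cubic \<alpha> \<beta> x = y^2 + L * k1" "1 = x * w + L * k2"
    using y w by (auto simp: cong_iff_lin)
  then have "[(\<alpha> * \<beta> * y * w^2)^2 = split_cubic \<alpha> \<beta> (\<alpha> * \<beta> * w)] (mod L)"
    unfolding cong_iff_lin split_cubic_def by algebra
  also have "[split_cubic \<alpha> \<beta> (\<alpha> * \<beta> * w) = split_cubic \<alpha> \<beta> (translate x)] (mod L)"
    unfolding translate_def w_def by (rule cong_split_cubic) simp
  finally have "[(\<alpha> * \<beta> * y * w^2)^2 = split_cubic \<alpha> \<beta> (translate x)] (mod L)" .
  moreover have "\<not> L dvd \<alpha> * \<beta> * y * w^2"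
    using not_dvd_\<alpha> not_dvd_\<beta> \<open>\<not> L dvd y\<close> w(2) prime
    by (simp add: not_dvd_mult_iff prime_dvd_power_iff)
  ultimately show ?thesis
    using L_pos by (intro mem_two_point_abscissas) (auto simp: translate_def)
qed

lemma translate_translate:
  assumes "x \<in> two_point_abscissas"
  shows "translate (translate x) = x"
proof -
  define t where "t = translate x"
  have x: "\<not> L dvd x" "0 \<le> x" "x < L"
    using assms by (auto elim: two_point_abscissasE)
  have "\<not> L dvd t"
    using translate_mem[OF assms] unfolding t_def by (auto elim: two_point_abscissasE)
  obtain k1 k2 k3 where
    "1 = x * modular_inverse L x + L * k1"
    "1 = t * modular_inverse L t + L * k2"
    "t = \<alpha> * \<beta> * modular_inverse L x + L * k3"
    using cong_modular_inverse[OF x(1)] cong_modular_inverse[OF \<open>\<not> L dvd t\<close>]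
      cong_mod_left[of "\<alpha> * \<beta> * modular_inverse L x" L t]
    unfolding t_def translate_def cong_iff_lin by auto
  then have "[\<alpha> * \<beta> * modular_inverse L t = x] (mod L)"
    unfolding cong_iff_lin by algebra
  then show ?thesis
    using x L_pos unfolding t_def by (auto simp: translate_def cong_def)
qed

lemma translate_eq_self_iff:
  assumes "x \<in> two_point_abscissas"
  shows "translate x = x \<longleftrightarrow> [x^2 = \<alpha> * \<beta>] (mod L)"
proof -
  have x: "\<not> L dvd x" "0 \<le> x" "x < L"
    using assms by (auto elim: two_point_abscissasE)
  then obtain k where k: "1 = x * modular_inverse L x + L * k"
    using cong_modular_inverse by (auto simp: cong_iff_lin)
  have "[\<alpha> * \<beta> * modular_inverse L x = x] (mod L) \<longleftrightarrow> [x^2 = \<alpha> * \<beta>] (mod L)"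
  proof
    assume "[\<alpha> * \<beta> * modular_inverse L x = x] (mod L)"
    then obtain k' where "x = \<alpha> * \<beta> * modular_inverse L x + L * k'"
      by (auto simp: cong_iff_lin)
    then show "[x^2 = \<alpha> * \<beta>] (mod L)"
      using k unfolding cong_iff_lin by algebra
  next
    assume "[x^2 = \<alpha> * \<beta>] (mod L)"
    then obtain k' where "\<alpha> * \<beta> = x^2 + L * k'"
      by (auto simp: cong_iff_lin)
    then show "[\<alpha> * \<beta> * modular_inverse L x = x] (mod L)"
      using k unfolding cong_iff_lin by algebra
  qed
  then show ?thesis
    using x L_pos by (auto simp: translate_def cong_def)
qed

lemma fixpoints_translate:
  "{x \<in> two_point_abscissas. translate x = x} = two_point_abscissas \<inter> sqrts_mod L (\<alpha> * \<beta>)"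
  using translate_eq_self_iff by (auto simp: two_point_abscissas_def sqrts_mod_def)

lemma minus_mem_two_point_abscissas:
  assumes s: "s \<in> two_point_abscissas" and s_sqrt: "[s^2 = \<alpha> * \<beta>] (mod L)"
  shows "L - s \<in> two_point_abscissas"
proof -
  obtain y where y: "[y^2 = split_cubic \<alpha> \<beta> s] (mod L)" "\<not> L dvd y" and "\<not> L dvd s" "0 \<le> s" "s < L"
    using s by (rule two_point_abscissasE)
  define w where "w = modular_inverse L y"
  \<comment> \<open>If \<open>s^2 = \<alpha>\<beta>\<close> then \<open>split_cubic \<alpha> \<beta> s * split_cubic \<alpha> \<beta> (- s) = (s^2 (\<alpha> - \<beta>))^2\<close>.\<close>
  obtain k1 k2 k3 where "\<alpha> * \<beta> = s^2 + L * k1" "split_cubic \<alpha> \<beta> s = y^2 + L * k2" "1 = y * w + L * k3"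
    using s_sqrt y cong_modular_inverse[of y] unfolding w_def by (auto simp: cong_iff_lin)
  then have "[(s^2 * (\<alpha> - \<beta>) * w)^2 = split_cubic \<alpha> \<beta> (- s)] (mod L)"
    unfolding cong_iff_lin split_cubic_def by algebra
  also have "[split_cubic \<alpha> \<beta> (- s) = split_cubic \<alpha> \<beta> (L - s)] (mod L)"
    by (rule cong_split_cubic) (simp add: cong_iff_lin)
  finally have "[(s^2 * (\<alpha> - \<beta>) * w)^2 = split_cubic \<alpha> \<beta> (L - s)] (mod L)" .
  moreover have "\<not> L dvd s^2 * (\<alpha> - \<beta>) * w"
    using \<open>\<not> L dvd s\<close> not_dvd_diff not_dvd_modular_inverse[OF y(2)] prime
    by (simp add: w_def not_dvd_mult_iff prime_dvd_power_iff)
  moreover have "0 < s"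
    using \<open>0 \<le> s\<close> \<open>\<not> L dvd s\<close> by (cases "s = 0") auto
  ultimately show ?thesis
    using \<open>s < L\<close> by (intro mem_two_point_abscissas) auto
qed

lemma even_card_fixpoints_translate:
  "even (card {x \<in> two_point_abscissas. translate x = x})"
proof (cases "two_point_abscissas \<inter> sqrts_mod L (\<alpha> * \<beta>) = {}")
  case True
  then show ?thesis
    by (simp add: fixpoints_translate)
next
  case False
  then obtain s where s: "s \<in> two_point_abscissas" "s \<in> sqrts_mod L (\<alpha> * \<beta>)"
    by blast
  have "\<not> L dvd \<alpha> * \<beta>"
    using not_dvd_\<alpha> not_dvd_\<beta> by (simp add: not_dvd_mult_iff)
  then have pair: "sqrts_mod L (\<alpha> * \<beta>) = {s, L - s}" "s \<noteq> L - s"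
    using sqrts_mod_eq_pair[OF prime odd _ s(2)] by auto
  have "L - s \<in> two_point_abscissas"
    using s by (intro minus_mem_two_point_abscissas) (auto simp: sqrts_mod_def)
  then have "two_point_abscissas \<inter> sqrts_mod L (\<alpha> * \<beta>) = {s, L - s}"
    using s pair(1) by auto
  then show ?thesis
    using pair(2) by (simp add: fixpoints_translate)
qed

lemma even_card_two_point_abscissas: "even (card two_point_abscissas)"
proof -
  have "finite two_point_abscissas"
    by (rule finite_subset[of _ "{0..<L}"]) (auto simp: two_point_abscissas_def)
  then show ?thesis
    using even_card_fixpoints_translate translate_mem translate_translate
    by (subst even_card_iff_even_card_fixpoints) auto
qed

lemma card_roots: "card roots = 3"
proof -
  have "roots = {0, \<alpha> mod L, \<beta> mod L}"
  proof (intro equalityI subsetI)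
    fix x assume "x \<in> roots"
    then have "0 \<le> x" "x < L" "[x = 0] (mod L) \<or> [x = \<alpha>] (mod L) \<or> [x = \<beta>] (mod L)"
      using prime by (auto simp: roots_def split_cubic_def prime_dvd_mult_iff cong_iff_dvd_diff)
    then show "x \<in> {0, \<alpha> mod L, \<beta> mod L}"
      using L_pos by (auto simp: cong_def)
  next
    fix x assume "x \<in> {0, \<alpha> mod L, \<beta> mod L}"
    then have "[x = 0] (mod L) \<or> [x = \<alpha>] (mod L) \<or> [x = \<beta>] (mod L)"
      by (auto simp: cong_def)
    then show "x \<in> roots"
      using \<open>x \<in> {0, \<alpha> mod L, \<beta> mod L}\<close> L_pos
      by (auto simp: roots_def split_cubic_def cong_iff_dvd_diff)
  qed
  moreover have "0 \<noteq> \<alpha> mod L" "0 \<noteq> \<beta> mod L" "\<alpha> mod L \<noteq> \<beta> mod L"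
    using not_dvd_\<alpha> not_dvd_\<beta> not_dvd_diff by (auto simp: mod_eq_dvd_iff dvd_eq_mod_eq_0)
  ultimately show ?thesis
    by simp
qed

lemma card_cubic_points: "card (cubic_points L \<alpha> \<beta>) = card roots + 2 * card two_point_abscissas"
proof -
  have "cubic_points L \<alpha> \<beta> = (SIGMA x:{0..<L}. sqrts_mod L (split_cubic \<alpha> \<beta> x))"
    by (auto simp: cubic_points_def sqrts_mod_def)
  then have "card (cubic_points L \<alpha> \<beta>) = (\<Sum>x\<in>{0..<L}. card (sqrts_mod L (split_cubic \<alpha> \<beta> x)))"
    by (simp add: card_SigmaI)
  also have "\<dots> = (\<Sum>x\<in>{0..<L}. of_bool (x \<in> roots) + 2 * of_bool (x \<in> two_point_abscissas))"
    by (intro sum.cong refl)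
      (auto simp: card_sqrts_mod[OF prime odd] roots_def two_point_abscissas_def)
  also have "\<dots> = card roots + 2 * card two_point_abscissas"
    by (simp add: sum.distrib sum_distrib_left[symmetric] roots_def two_point_abscissas_def
        Int_def flip: sum.inter_filter)
  finally show ?thesis .
qed

lemma card_roots_add_card_two_point_abscissas_le: "card roots + card two_point_abscissas \<le> nat L"
proof -
  have "card (roots \<union> two_point_abscissas) \<le> card {0..<L}"
    by (intro card_mono) (auto simp: roots_def two_point_abscissas_def)
  moreover have "roots \<inter> two_point_abscissas = {}"
    by (auto simp: roots_def two_point_abscissas_def)
  moreover have "finite roots" "finite two_point_abscissas"
    by (auto intro: finite_subset[of _ "{0..<L}"] simp: roots_def two_point_abscissas_def)
  ultimately show ?thesis
    by (simp add: card_Un_disjoint)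
qed

end

section \<open>Integral models of \<open>y^2 = x (x + A) (x + B)\<close>\<close>

lemma bij_betw_triangular_mod:
  fixes L a c :: int
  assumes "0 < L" "coprime a L" "coprime c L"
  shows "bij_betw (\<lambda>(x, y). ((a * x + b) mod L, (c * y + d * x + e) mod L))
           ({0..<L} \<times> {0..<L}) ({0..<L} \<times> {0..<L})"
    (is "bij_betw ?f ?box ?box")
proof -
  have "inj_on ?f ?box"
  proof (intro inj_onI, clarsimp)
    fix x y x' y'
    assume box: "0 \<le> x" "x < L" "0 \<le> y" "y < L" "0 \<le> x'" "x' < L" "0 \<le> y'" "y' < L"
      and eq_x: "(a * x + b) mod L = (a * x' + b) mod L"
      and eq_y: "(c * y + d * x + e) mod L = (c * y' + d * x' + e) mod L"
    have "[a * x = a * x'] (mod L)"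
      using eq_x cong_add_rcancel[of "a * x" b "a * x'" L] by (simp add: cong_def)
    then have "x = x'"
      using assms(2) box by (auto simp: cong_mult_lcancel intro: cong_less_imp_eq_int)
    then have "[c * y = c * y'] (mod L)"
      using eq_y cong_add_rcancel[of "c * y" "d * x + e" "c * y'" L] by (simp add: cong_def add.assoc)
    then have "y = y'"
      using assms(3) box by (auto simp: cong_mult_lcancel intro: cong_less_imp_eq_int)
    with \<open>x = x'\<close> show "x = x' \<and> y = y'" ..
  qed
  moreover have "?f ` ?box \<subseteq> ?box"
    using assms(1) by auto
  ultimately show ?thesis
    by (simp add: bij_betw_def card_image card_subset_eq)
qed

text \<open>\<open>F1, F2, F3\<close> are the roots of \<open>X^3 + b2 X^2 + 8 b4 X + 16 b6\<close>, i.e. the values of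
  \<open>4 x\<close> at the three points of order 2 of \<open>W\<close>.\<close>
definition two_division_roots :: "int wmodel \<Rightarrow> int \<Rightarrow> int \<Rightarrow> int \<Rightarrow> bool" where
  "two_division_roots W F1 F2 F3 \<longleftrightarrow>
     a1 W^2 + 4 * a2 W = - (F1 + F2 + F3) \<and>
     8 * (2 * a4 W + a1 W * a3 W) = F1 * F2 + F1 * F3 + F2 * F3 \<and>
     16 * (a3 W^2 + 4 * a6 W) = - (F1 * F2 * F3)"

lemma wdisc_eq_of_two_division_roots:
  "two_division_roots W F1 F2 F3 \<Longrightarrow> 256 * wdisc W = ((F1 - F2) * (F1 - F3) * (F2 - F3))^2"
  unfolding two_division_roots_def wdisc_def Let_def by algebra

lemma weq_eq_of_two_division_roots:
  "two_division_roots W F1 F2 F3 \<Longrightarrow>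
     64 * weq W x y = (8 * y + 4 * a1 W * x + 4 * a3 W)^2 - split_cubic (F2 - F1) (F3 - F1) (4 * x - F1)"
  unfolding two_division_roots_def weq_def split_cubic_def by algebra

lemma coprime_two_power_if_odd: "odd L \<Longrightarrow> coprime (2 ^ k) (L :: int)"
  by simp

lemma dvd_weq_iff_cong_split_cubic:
  assumes "odd L" and roots: "two_division_roots W F1 F2 F3"
  shows "L dvd weq W x y \<longleftrightarrow>
    [((8 * y + 4 * a1 W * x + 4 * a3 W) mod L)^2 = split_cubic (F2 - F1) (F3 - F1) ((4 * x + - F1) mod L)] (mod L)"
proof -
  have "L dvd weq W x y \<longleftrightarrow> L dvd 64 * weq W x y"
    using coprime_two_power_if_odd[OF assms(1), of 6] by (simp add: coprime_commute coprime_dvd_mult_right_iff)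
  also have "\<dots> \<longleftrightarrow> [(8 * y + 4 * a1 W * x + 4 * a3 W)^2 = split_cubic (F2 - F1) (F3 - F1) (4 * x - F1)] (mod L)"
    by (simp add: weq_eq_of_two_division_roots[OF roots] cong_iff_dvd_diff)
  also have "[split_cubic (F2 - F1) (F3 - F1) (4 * x - F1) =
      split_cubic (F2 - F1) (F3 - F1) ((4 * x + - F1) mod L)] (mod L)"
    by (rule cong_split_cubic) (simp add: cong_def)
  then have "[(8 * y + 4 * a1 W * x + 4 * a3 W)^2 = split_cubic (F2 - F1) (F3 - F1) (4 * x - F1)] (mod L) \<longleftrightarrow>
      [((8 * y + 4 * a1 W * x + 4 * a3 W) mod L)^2 = split_cubic (F2 - F1) (F3 - F1) ((4 * x + - F1) mod L)] (mod L)"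
    by (simp add: cong_def power_mod)
  finally show ?thesis .
qed

lemma card_nat_square_eq_card_int_square:
  "card {(x, y). x < l \<and> y < l \<and> P (int x) (int y)} =
     card {(x, y) \<in> {0..<int l} \<times> {0..<int l}. P x y}"
proof -
  have "{(x, y) \<in> {0..<int l} \<times> {0..<int l}. P x y} =
      (\<lambda>(x, y). (int x, int y)) ` {(x, y). x < l \<and> y < l \<and> P (int x) (int y)}"
  proof (intro equalityI subsetI)
    fix z assume "z \<in> {(x, y) \<in> {0..<int l} \<times> {0..<int l}. P x y}"
    then obtain x y where "z = (x, y)" "0 \<le> x" "x < int l" "0 \<le> y" "y < int l" "P x y"
      by auto
    then show "z \<in> (\<lambda>(x, y). (int x, int y)) ` {(x, y). x < l \<and> y < l \<and> P (int x) (int y)}"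
      by (intro image_eqI[of _ _ "(nat x, nat y)"]) auto
  qed auto
  moreover have "inj (\<lambda>(x, y). (int x, int y))"
    by (auto intro: injI)
  ultimately show ?thesis
    by (simp add: card_image inj_on_subset)
qed

lemma npoints_mod_eq_card_cubic_points:
  fixes l :: nat
  assumes "odd l" and roots: "two_division_roots W F1 F2 F3"
  shows "npoints_mod W l = card (cubic_points (int l) (F2 - F1) (F3 - F1)) + 1"
proof -
  define L where "L = int l"
  define box where "box = {0..<L} \<times> {0..<L}"
  have L: "0 < L" "odd L"
    using \<open>odd l\<close> unfolding L_def by (auto intro: odd_pos)
  have "bij_betw (\<lambda>(x, y). ((4 * x + - F1) mod L, (8 * y + 4 * a1 W * x + 4 * a3 W) mod L)) box box"
    unfolding box_def using L coprime_two_power_if_odd[of L 2] coprime_two_power_if_odd[of L 3]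
    by (intro bij_betw_triangular_mod) simp_all
  then have "bij_betw (\<lambda>(x, y). ((4 * x + - F1) mod L, (8 * y + 4 * a1 W * x + 4 * a3 W) mod L))
      {z \<in> box. case z of (x, y) \<Rightarrow> L dvd weq W x y}
      {z \<in> box. case z of (X, Y) \<Rightarrow> [Y^2 = split_cubic (F2 - F1) (F3 - F1) X] (mod L)}"
    by (rule bij_betw_Collect) (auto simp: dvd_weq_iff_cong_split_cubic[OF L(2) roots])
  moreover have "{z \<in> box. case z of (x, y) \<Rightarrow> L dvd weq W x y} = {(x, y) \<in> box. L dvd weq W x y}"
    and "{z \<in> box. case z of (X, Y) \<Rightarrow> [Y^2 = split_cubic (F2 - F1) (F3 - F1) X] (mod L)} =
      cubic_points L (F2 - F1) (F3 - F1)"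
    by (auto simp: cubic_points_def box_def)
  ultimately have "card {(x, y) \<in> box. L dvd weq W x y} = card (cubic_points L (F2 - F1) (F3 - F1))"
    by (simp only: bij_betw_same_card)
  then show ?thesis
    using card_nat_square_eq_card_int_square[of l "\<lambda>x y. L dvd weq W x y"]
    unfolding npoints_mod_def box_def L_def by simp
qed

lemma not_dvd_if_four_dvd_less_double:
  fixes l N :: nat
  assumes "odd l" "4 dvd N" "0 < N" "N < 2 * l"
  shows "\<not> l dvd N"
proof
  assume "l dvd N"
  then obtain k where k: "N = l * k"
    by (rule dvdE)
  with assms(4) have "l * k < l * 2"
    by simp
  moreover have "k \<noteq> 0"
    using k assms(3) by auto
  ultimately have "k = 1"
    by simp
  then have "odd N"
    using k assms(1) by simp
  moreover have "even N"
    using assms(2) by (rule dvd_trans[rotated]) simp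
  ultimately show False
    by simp
qed

lemma not_dvd_npoints_mod:
  fixes l :: nat
  assumes l: "prime l" "odd l" and roots: "two_division_roots W F1 F2 F3"
    and good: "\<not> int l dvd wdisc W"
  shows "\<not> l dvd npoints_mod W l"
proof -
  have "\<not> int l dvd (F1 - F2) * (F1 - F3) * (F2 - F3)"
  proof
    assume "int l dvd (F1 - F2) * (F1 - F3) * (F2 - F3)"
    then have "int l dvd 256 * wdisc W"
      unfolding wdisc_eq_of_two_division_roots[OF roots] by (simp add: power2_eq_square)
    then show False
      using good coprime_two_power_if_odd[of "int l" 8] l(2)
      by (simp add: coprime_commute coprime_dvd_mult_right_iff)
  qed
  then interpret split_cubic_mod "int l" "F2 - F1" "F3 - F1"
    using l by unfold_locales (auto simp: prime_dvd_mult_iff dvd_diff_commute)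
  have N: "npoints_mod W l = 4 + 2 * card two_point_abscissas"
    using npoints_mod_eq_card_cubic_points[OF l(2) roots] card_cubic_points card_roots by simp
  have "card two_point_abscissas + 3 \<le> l"
    using card_roots_add_card_two_point_abscissas_le card_roots by simp
  then have "npoints_mod W l < 2 * l"
    using N by simp
  moreover have "4 dvd npoints_mod W l"
    using N even_card_two_point_abscissas by auto
  moreover have "0 < npoints_mod W l"
    using N by simp
  ultimately show ?thesis
    using l(2) not_dvd_if_four_dvd_less_double by blast
qed

lemma monic_int_cubic_rat_root_in_Ints:
  fixes x :: rat and a b c :: int
  assumes "x^3 + of_int a * x^2 + of_int b * x + of_int c = 0"
  shows "x \<in> \<int>"
proof -
  obtain n d where q: "quotient_of x = (n, d)"
    by (cases "quotient_of x")
  have x: "x = of_int n / of_int d" and "d > 0" and "coprime n d"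
    using quotient_of_div[OF q] quotient_of_denom_pos[OF q] quotient_of_coprime[OF q] by simp_all
  have "rat_of_int (n^3 + a * n^2 * d + b * n * d^2 + c * d^3) =
      of_int (d^3) * (x^3 + of_int a * x^2 + of_int b * x + of_int c)"
    using \<open>d > 0\<close> unfolding x by (simp add: field_simps power3_eq_cube power2_eq_square)
  then have "n^3 + a * n^2 * d + b * n * d^2 + c * d^3 = 0"
    using assms by (simp only: of_int_eq_0_iff mult_zero_right)
  then have "n^3 = d * (- (a * n^2 + b * n * d + c * d^2))"
    by (simp add: algebra_simps power2_eq_square power3_eq_cube)
  then have "d dvd n^3"
    by simp
  moreover have "coprime d (n^3)"
    using \<open>coprime n d\<close> by (simp add: coprime_commute)
  ultimately have "is_unit d"
    by (metis coprime_common_divisor dvd_refl)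
  then have "d = 1"
    using \<open>d > 0\<close> by simp
  then show ?thesis
    using x by simp
qed

lemma integral_two_division_roots:
  fixes W :: "int wmodel" and f1 f2 f3 :: rat
  assumes V1: "rat_of_int (a1 W^2 + 4 * a2 W) = - (f1 + f2 + f3)"
    and V2: "rat_of_int (8 * (2 * a4 W + a1 W * a3 W)) = f1 * f2 + f1 * f3 + f2 * f3"
    and V3: "rat_of_int (16 * (a3 W^2 + 4 * a6 W)) = - (f1 * f2 * f3)"
  obtains F1 F2 F3 where "f1 = of_int F1" "f2 = of_int F2" "f3 = of_int F3"
    and "two_division_roots W F1 F2 F3"
proof -
  have "f \<in> \<int>" if "f \<in> {f1, f2, f3}" for f
  proof (rule monic_int_cubic_rat_root_in_Ints)
    show "f^3 + of_int (a1 W^2 + 4 * a2 W) * f^2 + of_int (8 * (2 * a4 W + a1 W * a3 W)) * f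
        + of_int (16 * (a3 W^2 + 4 * a6 W)) = 0"
      unfolding V1 V2 V3 using that by (auto simp: algebra_simps power2_eq_square power3_eq_cube)
  qed
  then obtain F1 F2 F3 where F: "f1 = of_int F1" "f2 = of_int F2" "f3 = of_int F3"
    by (metis Ints_cases insertI1 insertCI)
  have "rat_of_int (a1 W^2 + 4 * a2 W) = of_int (- (F1 + F2 + F3))"
    "rat_of_int (8 * (2 * a4 W + a1 W * a3 W)) = of_int (F1 * F2 + F1 * F3 + F2 * F3)"
    "rat_of_int (16 * (a3 W^2 + 4 * a6 W)) = of_int (- (F1 * F2 * F3))"
    using V1 V2 V3 unfolding F by simp_all
  then have "two_division_roots W F1 F2 F3"
    unfolding of_int_eq_iff two_division_roots_def by simp
  with F show ?thesis
    by (rule that)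
qed

lemma two_division_roots_of_wiso_E_ab:
  fixes A B :: int and W :: "int wmodel"
  assumes "wiso (E_ab (of_int A) (of_int B)) (map_wmodel of_int W)"
  obtains F1 F2 F3 where "two_division_roots W F1 F2 F3" and "(F1 - F2) * B = (F1 - F3) * A"
proof -
  obtain w1 w2 w3 w4 w6 where W: "W = WM w1 w2 w3 w4 w6"
    by (cases W)
  obtain u r s t :: rat where "u \<noteq> 0"
    and h1: "u * of_int w1 = 2 * s"
    and h2: "u^2 * of_int w2 = (of_int A + of_int B) + 3 * r - s^2"
    and h3: "u^3 * of_int w3 = 2 * t"
    and h4: "u^4 * of_int w4 = of_int A * of_int B + 2 * r * (of_int A + of_int B) + 3 * r^2 - 2 * s * t"
    and h6: "u^6 * of_int w6 = r * (of_int A * of_int B) + r^2 * (of_int A + of_int B) + r^3 - t^2"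
    using assms unfolding wiso_def E_ab_def W by auto
  define v where "v = 1 / u"
  have uv: "u * v = 1"
    using \<open>u \<noteq> 0\<close> unfolding v_def by simp
  text \<open>The points of order 2 of \<open>E_ab\<close> have \<open>x \<in> {0, -A, -B}\<close>; with \<open>x = u^2 x' + r\<close>,
    \<open>f1, f2, f3\<close> are the corresponding values of \<open>4 x'\<close>.\<close>
  define f1 where "f1 = -4 * r * v^2"
  define f2 where "f2 = -4 * (of_int A + r) * v^2"
  define f3 where "f3 = -4 * (of_int B + r) * v^2"
  have "rat_of_int (a1 W^2 + 4 * a2 W) = - (f1 + f2 + f3)"
    unfolding f1_def f2_def f3_def W wmodel.sel of_int_add of_int_mult of_int_power of_int_numeral
    using uv h1 h2 by algebra
  moreover have "rat_of_int (8 * (2 * a4 W + a1 W * a3 W)) = f1 * f2 + f1 * f3 + f2 * f3"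
    unfolding f1_def f2_def f3_def W wmodel.sel of_int_add of_int_mult of_int_power of_int_numeral
    using uv h1 h3 h4 by algebra
  moreover have "rat_of_int (16 * (a3 W^2 + 4 * a6 W)) = - (f1 * f2 * f3)"
    unfolding f1_def f2_def f3_def W wmodel.sel of_int_add of_int_mult of_int_power of_int_numeral
    using uv h3 h6 by algebra
  ultimately obtain F1 F2 F3 where F: "f1 = of_int F1" "f2 = of_int F2" "f3 = of_int F3"
    and roots: "two_division_roots W F1 F2 F3"
    by (rule integral_two_division_roots)
  have "(f1 - f2) * of_int B = (f1 - f3) * of_int A"
    unfolding f1_def f2_def f3_def by algebra
  then have "(F1 - F2) * B = (F1 - F3) * A"
    unfolding F by (metis of_int_diff of_int_mult of_int_eq_iff)
  with roots show ?thesis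
    by (rule that)
qed

lemma coprime_cross_mult_eqE:
  fixes p q u v :: int
  assumes "coprime p q" "p \<noteq> 0" "u * q = v * p"
  obtains C where "u = C * p" "v = C * q"
proof -
  have "p dvd u * q"
    using assms(3) by simp
  then have "p dvd u"
    using assms(1) by (simp add: coprime_dvd_mult_left_iff)
  then obtain C where "u = C * p"
    by (metis dvd_def mult.commute)
  moreover from this have "v = C * q"
    using assms(2,3) by (simp add: algebra_simps)
  ultimately show ?thesis
    by (rule that)
qed

lemma even_wdisc_of_even_a1_a3:
  fixes W :: "int wmodel"
  assumes "even (a1 W)" "even (a3 W)"
  shows "even (wdisc W)"
  using assms unfolding wdisc_def Let_def by (auto elim!: evenE simp: algebra_simps)

lemma even_a1_a3_of_two_division_roots:
  fixes c p F1 :: int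
  assumes "odd c" "odd p"
    and roots: "two_division_roots W F1 (F1 - 2 * c * p) (F1 - 2 * c * (p + 2))"
  shows "even (a1 W)" and "even (a3 W)"
proof -
  have b2: "a1 W^2 + 4 * a2 W = - (3 * F1 - 2 * c * p - 2 * c * (p + 2))"
    and b4: "8 * (2 * a4 W + a1 W * a3 W) =
      F1 * (F1 - 2 * c * p) + F1 * (F1 - 2 * c * (p + 2)) + (F1 - 2 * c * p) * (F1 - 2 * c * (p + 2))"
    and b6: "16 * (a3 W^2 + 4 * a6 W) = - (F1 * (F1 - 2 * c * p) * (F1 - 2 * c * (p + 2)))"
    using roots unfolding two_division_roots_def by (simp_all add: algebra_simps)
  have "even F1"
  proof (rule ccontr)
    assume "odd F1"
    then have "odd (16 * (a3 W^2 + 4 * a6 W))"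
      unfolding b6 by simp
    then show False
      by simp
  qed
  then obtain g where g: "F1 = 2 * g"
    by (rule evenE)
  have "odd g"
  proof
    assume "even g"
    have "2 * (2 * a4 W + a1 W * a3 W) = g * (g - c * p) + g * (g - c * (p + 2)) + (g - c * p) * (g - c * (p + 2))"
      using b4 unfolding g by (simp add: algebra_simps)
    moreover have "odd (g * (g - c * p) + g * (g - c * (p + 2)) + (g - c * p) * (g - c * (p + 2)))"
      using \<open>even g\<close> \<open>odd c\<close> \<open>odd p\<close> by simp
    ultimately show False
      by (metis dvd_triv_left)
  qed
  then obtain h1 h2 where h1: "g - c * p = 2 * h1" and h2: "g - c * (p + 2) = 2 * h2"
    using \<open>odd c\<close> \<open>odd p\<close> by (metis evenE even_diff even_add even_mult_iff even_numeral)
  have "2 * (a3 W^2 + 4 * a6 W) = - (g * (g - c * p) * (g - c * (p + 2)))"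
    using b6 unfolding g by (simp add: algebra_simps)
  then have "2 * (a3 W^2 + 4 * a6 W) = - (g * (2 * h1) * (2 * h2))"
    unfolding h1 h2 .
  then have "a3 W^2 = 2 * (- (g * h1 * h2) - 2 * a6 W)"
    by (simp add: algebra_simps)
  then show "even (a3 W)"
    by (metis dvd_triv_left even_power zero_less_numeral)
  have "a1 W^2 = 2 * (c * p + c * (p + 2) - 3 * g - 2 * a2 W)"
    using b2 unfolding g by (simp add: algebra_simps)
  then show "even (a1 W)"
    by (metis dvd_triv_left even_power zero_less_numeral)
qed

lemma even_wdisc_of_twin_two_division_roots:
  fixes p C F1 :: int
  assumes "odd p" and roots: "two_division_roots W F1 (F1 - C * p) (F1 - C * (p + 2))"
  shows "even (wdisc W)"
proof (rule ccontr)
  assume odd_disc: "odd (wdisc W)"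
  have disc: "64 * wdisc W = C^6 * p^2 * (p + 2)^2"
    using wdisc_eq_of_two_division_roots[OF roots] by algebra
  have "even C"
  proof (rule ccontr)
    assume "odd C"
    then have "odd (64 * wdisc W)"
      unfolding disc using \<open>odd p\<close> by simp
    then show False
      by simp
  qed
  then obtain c where c: "C = 2 * c"
    by (rule evenE)
  have "wdisc W = c^6 * p^2 * (p + 2)^2"
    using disc unfolding c by (simp add: power_mult_distrib)
  then have "odd c"
    using odd_disc by simp
  have "two_division_roots W F1 (F1 - 2 * c * p) (F1 - 2 * c * (p + 2))"
    using roots unfolding c by (simp add: mult.assoc)
  then show False
    using even_a1_a3_of_two_division_roots[OF \<open>odd c\<close> \<open>odd p\<close>] even_wdisc_of_even_a1_a3 odd_disc
    by blast
qed

lemma anomalousE: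
  assumes "anomalous E l"
  obtains W where "prime l" "wiso E (map_wmodel of_int W)" "\<not> int l dvd wdisc W" "l dvd npoints_mod W l"
  using assms unfolding anomalous_def by blast

lemma Anom_E_ab_twin:
  fixes k p :: int
  assumes "k \<noteq> 0" "odd p"
  shows "Anom (E_ab (of_int (k * p)) (of_int (k * (p + 2)))) = {}"
proof -
  have "\<not> anomalous (E_ab (of_int (k * p)) (of_int (k * (p + 2)))) l" for l
  proof
    assume "anomalous (E_ab (of_int (k * p)) (of_int (k * (p + 2)))) l"
    then obtain W where l: "prime l" and W: "wiso (E_ab (of_int (k * p)) (of_int (k * (p + 2)))) (map_wmodel of_int W)"
      and good: "\<not> int l dvd wdisc W" and anom: "l dvd npoints_mod W l"
      by (rule anomalousE)
    obtain F1 F2 F3 where roots: "two_division_roots W F1 F2 F3"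
      and "(F1 - F2) * (k * (p + 2)) = (F1 - F3) * (k * p)"
      using W by (rule two_division_roots_of_wiso_E_ab)
    then have "(F1 - F2) * (p + 2) = (F1 - F3) * p"
      using \<open>k \<noteq> 0\<close> by (simp add: ac_simps)
    moreover have "coprime p (p + 2)"
      using gcd_add_mult[of p 1 2] \<open>odd p\<close> by (metis coprime_iff_gcd_eq_1 coprime_right_2_iff_odd mult_1)
    moreover have "p \<noteq> 0"
      using \<open>odd p\<close> by auto
    ultimately obtain C where "F1 - F2 = C * p" "F1 - F3 = C * (p + 2)"
      by (elim coprime_cross_mult_eqE)
    then have twin: "two_division_roots W F1 (F1 - C * p) (F1 - C * (p + 2))"
      using roots by (simp add: algebra_simps)
    show False
    proof (cases "l = 2")
      case True
      then show False
        using even_wdisc_of_twin_two_division_roots[OF \<open>odd p\<close> twin] good by simp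
    next
      case False
      then have "odd l"
        using l prime_ge_2_nat[OF l] by (intro prime_odd_nat) simp_all
      then show False
        using not_dvd_npoints_mod[OF l _ roots good] anom by blast
    qed
  qed
  then show ?thesis
    unfolding Anom_def by blast
qed

theorem proposition2p4:
  fixes p q :: nat and \<epsilon> :: int and S :: "nat set" and D :: nat
  assumes "prime p" "prime q" "odd p" "odd q" "q - p = 2"
    and "\<epsilon> \<in> {1, -1}"
    and "finite S" "\<forall>r\<in>S. prime r \<and> odd r" "D = \<Prod>S"
    and "gcd (p * q) D = 1"
  shows "Anom (E_ab (of_int (\<epsilon> * int p * int D)) (of_int (\<epsilon> * int q * int D))) = {}"
proof -
  have "D > 0"
    unfolding assms(9) by (rule prod_pos) (use assms(8) prime_gt_0_nat in blast)
  then have "\<epsilon> * int D \<noteq> 0"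
    using assms(6) by auto
  moreover have "int q = int p + 2"
    using assms(5) by linarith
  ultimately show ?thesis
    using Anom_E_ab_twin[of "\<epsilon> * int D" "int p"] assms(3) by (simp add: ac_simps)
qed

end
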